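(* Let $\Gamma$ be a distance-regular graph with diameter $D\ge3$. Let $\sigma_0,\dots,\sigma_D$ and $\rho_0,\dots,\rho_D$ be nontrivial pseudo cosine sequences forming a tight pair, and let $\varepsilon$ be an auxiliary parameter for this pair with $\varepsilon\notin\{1,-1\}$. Then $\sigma_{i-1}\ne\sigma_i$ and $\rho_{i-1}\ne\rho_i$ for $1\le i\le D$.
   Context: $\Gamma$ is a finite connected undirected graph without loops or multiple edges, distance-regular with diameter $D$, intersection numbers $a_i,b_i,c_i$ ($c_0=0$, $b_D=0$), valency $k$, $c_i+a_i+b_i=k$. For $\theta\in\mathbb{R}$ the pseudo cosine sequence for $\theta$ is the sequence of reals $\sigma_0,\dots,\sigma_D$ with $\sigma_0=1$ and $c_i\sigma_{i-1}+a_i\sigma_i+b_i\sigma_{i+1}=\theta\sigma_i$ for $0\le i\le D-1$; nontrivial means $\sigma_1\ne1$. Pseudo cosine sequences $\sigma_i$, $\rho_i$ form a tight pair if $(\sigma_i\rho_i)_{i=0}^D$ is a pseudo cosine sequence. For a tight pair of nontrivial pseudo cosine sequences, an auxiliary parameter is a real $\varepsilon$ with $\sigma_i\rho_i-\sigma_{i-1}\rho_{i-1}=\varepsilon(\sigma_{i-1}\rho_i-\sigma_i\rho_{i-1})$ for $1\le i\le D$. *)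

theory Defs
  imports Complex_Main
begin

inductive walk :: "('v \<Rightarrow> 'v \<Rightarrow> bool) \<Rightarrow> 'v \<Rightarrow> 'v \<Rightarrow> nat \<Rightarrow> bool"
  for E where
  walk_nil: "walk E x x 0"
| walk_step: "E x y \<Longrightarrow> walk E y z n \<Longrightarrow> walk E x z (Suc n)"

definition gdist :: "('v \<Rightarrow> 'v \<Rightarrow> bool) \<Rightarrow> 'v \<Rightarrow> 'v \<Rightarrow> nat" where
  "gdist E x y = (LEAST n. walk E x y n)"

definition connected_simple_graph :: "'v set \<Rightarrow> ('v \<Rightarrow> 'v \<Rightarrow> bool) \<Rightarrow> bool" where
  "connected_simple_graph V E \<longleftrightarrow>
     finite V \<and> V \<noteq> {} \<and>
     (\<forall>x y. E x y \<longrightarrow> x \<in> V \<and> y \<in> V \<and> x \<noteq> y \<and> E y x) \<and>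
     (\<forall>x\<in>V. \<forall>y\<in>V. \<exists>n. walk E x y n)"

definition diameter :: "'v set \<Rightarrow> ('v \<Rightarrow> 'v \<Rightarrow> bool) \<Rightarrow> nat" where
  "diameter V E = Max {gdist E x y | x y. x \<in> V \<and> y \<in> V}"

definition distance_regular ::
  "'v set \<Rightarrow> ('v \<Rightarrow> 'v \<Rightarrow> bool) \<Rightarrow> nat \<Rightarrow> (nat \<Rightarrow> nat) \<Rightarrow> (nat \<Rightarrow> nat) \<Rightarrow> (nat \<Rightarrow> nat) \<Rightarrow> bool"
  where
  "distance_regular V E D a b c \<longleftrightarrow>
     connected_simple_graph V E \<and> D = diameter V E \<and>
     (\<forall>x\<in>V. \<forall>y\<in>V.
        c (gdist E x y) = card {z\<in>V. E y z \<and> gdist E x z + 1 = gdist E x y} \<and>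
        a (gdist E x y) = card {z\<in>V. E y z \<and> gdist E x z = gdist E x y} \<and>
        b (gdist E x y) = card {z\<in>V. E y z \<and> gdist E x z = gdist E x y + 1})"

(* pseudo cosine sequence for theta (only indices 0..D are relevant);
   at i = 0 the term c_0 sigma_{-1} vanishes since c_0 = 0 *)
definition pseudo_cosine ::
  "nat \<Rightarrow> (nat \<Rightarrow> nat) \<Rightarrow> (nat \<Rightarrow> nat) \<Rightarrow> (nat \<Rightarrow> nat) \<Rightarrow> real \<Rightarrow> (nat \<Rightarrow> real) \<Rightarrow> bool"
  where
  "pseudo_cosine D a b c \<theta> \<sigma> \<longleftrightarrow>
     \<sigma> 0 = 1 \<and>
     (\<forall>i<D. (if i = 0 then 0 else real (c i) * \<sigma> (i - 1)) + real (a i) * \<sigma> i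
              + real (b i) * \<sigma> (i + 1) = \<theta> * \<sigma> i)"

definition is_pseudo_cosine ::
  "nat \<Rightarrow> (nat \<Rightarrow> nat) \<Rightarrow> (nat \<Rightarrow> nat) \<Rightarrow> (nat \<Rightarrow> nat) \<Rightarrow> (nat \<Rightarrow> real) \<Rightarrow> bool"
  where
  "is_pseudo_cosine D a b c \<sigma> \<longleftrightarrow> (\<exists>\<theta>. pseudo_cosine D a b c \<theta> \<sigma>)"

definition nontrivial_pc :: "(nat \<Rightarrow> real) \<Rightarrow> bool" where
  "nontrivial_pc \<sigma> \<longleftrightarrow> \<sigma> 1 \<noteq> 1"

definition tight_pair ::
  "nat \<Rightarrow> (nat \<Rightarrow> nat) \<Rightarrow> (nat \<Rightarrow> nat) \<Rightarrow> (nat \<Rightarrow> nat) \<Rightarrow> (nat \<Rightarrow> real) \<Rightarrow> (nat \<Rightarrow> real) \<Rightarrow> bool"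
  where
  "tight_pair D a b c \<sigma> \<rho> \<longleftrightarrow>
     is_pseudo_cosine D a b c \<sigma> \<and> is_pseudo_cosine D a b c \<rho> \<and>
     is_pseudo_cosine D a b c (\<lambda>i. \<sigma> i * \<rho> i)"

definition auxiliary_parameter ::
  "nat \<Rightarrow> (nat \<Rightarrow> real) \<Rightarrow> (nat \<Rightarrow> real) \<Rightarrow> real \<Rightarrow> bool" where
  "auxiliary_parameter D \<sigma> \<rho> \<epsilon> \<longleftrightarrow>
     (\<forall>i\<in>{1..D}. \<sigma> i * \<rho> i - \<sigma> (i - 1) * \<rho> (i - 1)
                 = \<epsilon> * (\<sigma> (i - 1) * \<rho> i - \<sigma> i * \<rho> (i - 1)))"

end

(*
  At a plateau sigma (j+1) = sigma j with 0 < j < D, the three-term recurrence, together with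
  theta = k * sigma 1 (read off at i = 0, k = b 0) and k = c j + a j + b j, becomes
  c j * sigma (j-1) = (k * (sigma 1 - 1) + c j) * sigma j.  If sigma, rho and their product all
  had a plateau at the same j, multiplying the relations for sigma and rho and comparing with the
  one for the product would give k * (sigma 1 - 1) * (rho 1 - 1) * (k - c j) = 0, impossible for
  nontrivial sequences since k - c j = a j + b j > 0.  On the other hand, at a plateau of sigma
  the auxiliary parameter relation reads (1 - eps) * sigma j * (rho (j+1) - rho j) = 0, and at a
  plateau of rho it reads (1 + eps) * rho j * (sigma (j+1) - sigma j) = 0; as c j > 0 the
  recurrence never has two consecutive zeros, so for eps not in {1, -1} a plateau of one sequence
  is a plateau of the other.
*)

theory Submission
  imports Defs
begin

lemma walk_snoc: "walk E x y n \<Longrightarrow> E y z \<Longrightarrow> walk E x z (Suc n)"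
  by (induction rule: walk.induct) (auto intro: walk.intros)

lemma walk_append: "walk E x y m \<Longrightarrow> walk E y z n \<Longrightarrow> walk E x z (m + n)"
  by (induction rule: walk.induct) (auto intro: walk.intros)

lemma walk_split: "walk E x z (m + n) \<Longrightarrow> \<exists>y. walk E x y m \<and> walk E y z n"
proof (induction m arbitrary: x)
  case 0
  then show ?case by (auto intro: walk.intros)
next
  case (Suc m)
  then obtain x' where "E x x'" "walk E x' z (m + n)"
    by (auto elim: walk.cases)
  with Suc.IH obtain y where "walk E x' y m" "walk E y z n" by blast
  with \<open>E x x'\<close> show ?case by (auto intro: walk.intros)
qed

lemma walk_zeroD: "walk E x y 0 \<Longrightarrow> x = y"
  by (auto elim: walk.cases)

lemma walk_oneD: "walk E x y (Suc 0) \<Longrightarrow> E x y"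
  by (auto elim!: walk.cases)

lemma gdist_le: "walk E x y n \<Longrightarrow> gdist E x y \<le> n"
  unfolding gdist_def by (rule Least_le)

lemma walk_gdist: "walk E x y n \<Longrightarrow> walk E x y (gdist E x y)"
  unfolding gdist_def by (rule LeastI)

lemma gdist_self [simp]: "gdist E x x = 0"
  using gdist_le[OF walk_nil, of E x] by simp

lemma gdist_geodesic_split:
  assumes "walk E x y m" "walk E y z n" "gdist E x z = m + n"
  shows "gdist E x y = m"
proof -
  have "m + n \<le> gdist E x y + n"
    using assms(3) gdist_le[OF walk_append[OF walk_gdist[OF assms(1)] assms(2)]] by simp
  with gdist_le[OF assms(1)] show ?thesis by simp
qed

lemma connected_simple_graph_walk_gdist:
  "connected_simple_graph V E \<Longrightarrow> x \<in> V \<Longrightarrow> y \<in> V \<Longrightarrow> walk E x y (gdist E x y)"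
  unfolding connected_simple_graph_def by (meson walk_gdist)

lemma connected_simple_graph_walk_closed:
  assumes "connected_simple_graph V E" "walk E x y n" "x \<in> V"
  shows "y \<in> V"
  using assms(2,3) assms(1)[unfolded connected_simple_graph_def]
  by (induction rule: walk.induct) auto

lemma connected_simple_graph_gdist_eq_0D:
  "connected_simple_graph V E \<Longrightarrow> x \<in> V \<Longrightarrow> y \<in> V \<Longrightarrow> gdist E x y = 0 \<Longrightarrow> x = y"
  using connected_simple_graph_walk_gdist walk_zeroD by fastforce

lemma connected_simple_graph_gdist_adjacent:
  assumes G: "connected_simple_graph V E" and "x \<in> V" "E y z"
  shows "gdist E x z \<le> gdist E x y + 1"
proof -
  have "y \<in> V" using G \<open>E y z\<close> unfolding connected_simple_graph_def by blast
  then show ?thesis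
    using gdist_le[OF walk_snoc[OF connected_simple_graph_walk_gdist[OF G \<open>x \<in> V\<close>] \<open>E y z\<close>]]
    by simp
qed

lemma diameter_attained:
  assumes G: "connected_simple_graph V E"
  shows "\<exists>x\<in>V. \<exists>w\<in>V. gdist E x w = diameter V E"
proof -
  let ?M = "{gdist E x y | x y. x \<in> V \<and> y \<in> V}"
  have "?M = (\<lambda>(x, y). gdist E x y) ` (V \<times> V)" by auto
  then have "finite ?M" "?M \<noteq> {}"
    using G unfolding connected_simple_graph_def by auto
  then have "Max ?M \<in> ?M" by (rule Max_in)
  then obtain x w where "x \<in> V" "w \<in> V" "Max ?M = gdist E x w" by blast
  then show ?thesis unfolding diameter_def by metis
qed

lemma diameter_level:
  assumes G: "connected_simple_graph V E" and "j \<le> diameter V E"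
  shows "\<exists>x\<in>V. \<exists>y\<in>V. gdist E x y = j"
proof -
  obtain x w where "x \<in> V" "w \<in> V" and xw: "gdist E x w = diameter V E"
    using diameter_attained[OF G] by blast
  then have "walk E x w (j + (diameter V E - j))"
    using connected_simple_graph_walk_gdist[OF G] assms(2) by (metis le_add_diff_inverse)
  then obtain y where "walk E x y j" "walk E y w (diameter V E - j)"
    by (blast dest: walk_split)
  moreover from this have "y \<in> V"
    using connected_simple_graph_walk_closed[OF G] \<open>x \<in> V\<close> by blast
  ultimately show ?thesis
    using gdist_geodesic_split xw assms(2) \<open>x \<in> V\<close> by fastforce
qed

lemma diameter_edge_between_levels:
  assumes G: "connected_simple_graph V E" and "j < diameter V E"
  shows "\<exists>x\<in>V. \<exists>u\<in>V. \<exists>v\<in>V. E u v \<and> gdist E x u = j \<and> gdist E x v = Suc j"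
proof -
  obtain x v where "x \<in> V" "v \<in> V" and xv: "gdist E x v = j + 1"
    using diameter_level[OF G, of "Suc j"] assms(2) by auto
  then have "walk E x v (j + 1)"
    using connected_simple_graph_walk_gdist[OF G] by metis
  then obtain u where "walk E x u j" "walk E u v 1"
    by (blast dest: walk_split)
  moreover from this have "E u v" "u \<in> V"
    using walk_oneD connected_simple_graph_walk_closed[OF G] \<open>x \<in> V\<close> by auto
  ultimately show ?thesis
    using gdist_geodesic_split[OF _ _ xv] xv \<open>x \<in> V\<close> \<open>v \<in> V\<close> by auto
qed

lemma distance_regular_graph:
  "distance_regular V E D a b c \<Longrightarrow> connected_simple_graph V E"
  unfolding distance_regular_def by blast

lemma distance_regular_diameter:
  "distance_regular V E D a b c \<Longrightarrow> D = diameter V E"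
  unfolding distance_regular_def by blast

lemma distance_regular_intersection_numbers:
  assumes "distance_regular V E D a b c" "x \<in> V" "y \<in> V"
  shows "c (gdist E x y) = card {z\<in>V. E y z \<and> gdist E x z + 1 = gdist E x y}"
    and "a (gdist E x y) = card {z\<in>V. E y z \<and> gdist E x z = gdist E x y}"
    and "b (gdist E x y) = card {z\<in>V. E y z \<and> gdist E x z = gdist E x y + 1}"
  using assms unfolding distance_regular_def by blast+

lemma distance_regular_c_0:
  assumes DR: "distance_regular V E D a b c"
  shows "c 0 = 0"
proof -
  obtain y where "y \<in> V"
    using distance_regular_graph[OF DR] unfolding connected_simple_graph_def by blast
  then show ?thesis using distance_regular_intersection_numbers(1)[OF DR, of y y] by simp
qed

lemma distance_regular_a_0:
  assumes DR: "distance_regular V E D a b c"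
  shows "a 0 = 0"
proof -
  have G: "connected_simple_graph V E" using distance_regular_graph[OF DR] .
  then obtain y where "y \<in> V" unfolding connected_simple_graph_def by blast
  have "\<not> E y y" using G unfolding connected_simple_graph_def by blast
  have "a 0 = card {z\<in>V. E y z \<and> gdist E y z = 0}"
    using distance_regular_intersection_numbers(2)[OF DR \<open>y \<in> V\<close> \<open>y \<in> V\<close>] by simp
  also have "{z\<in>V. E y z \<and> gdist E y z = 0} = {}"
    using connected_simple_graph_gdist_eq_0D[OF G \<open>y \<in> V\<close>] \<open>\<not> E y y\<close> by auto
  finally show ?thesis by simp
qed

lemma distance_regular_neighbour_count:
  assumes DR: "distance_regular V E D a b c" and "x \<in> V" "y \<in> V"
  shows "c (gdist E x y) + a (gdist E x y) + b (gdist E x y) = card {z\<in>V. E y z}"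
proof -
  have G: "connected_simple_graph V E" using distance_regular_graph[OF DR] .
  let ?d = "gdist E x y"
  define C where "C = {z\<in>V. E y z \<and> gdist E x z + 1 = ?d}"
  define A where "A = {z\<in>V. E y z \<and> gdist E x z = ?d}"
  define B where "B = {z\<in>V. E y z \<and> gdist E x z = ?d + 1}"
  have "gdist E x z + 1 = ?d \<or> gdist E x z = ?d \<or> gdist E x z = ?d + 1" if "E y z" for z
  proof -
    have "E z y" using G \<open>E y z\<close> unfolding connected_simple_graph_def by blast
    then show ?thesis
      using connected_simple_graph_gdist_adjacent[OF G \<open>x \<in> V\<close>, of y z]
        connected_simple_graph_gdist_adjacent[OF G \<open>x \<in> V\<close>, of z y] \<open>E y z\<close> by arith
  qed
  then have "{z\<in>V. E y z} = C \<union> A \<union> B" unfolding C_def A_def B_def by auto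
  moreover have "finite C" "finite A" "finite B"
    using G unfolding connected_simple_graph_def C_def A_def B_def by auto
  moreover have "C \<inter> A = {}" "(C \<union> A) \<inter> B = {}" unfolding C_def A_def B_def by auto
  ultimately have "card {z\<in>V. E y z} = card C + card A + card B"
    by (simp add: card_Un_disjoint)
  then show ?thesis
    using distance_regular_intersection_numbers[OF assms] unfolding C_def A_def B_def by simp
qed

lemma distance_regular_valency:
  "distance_regular V E D a b c \<Longrightarrow> y \<in> V \<Longrightarrow> card {z\<in>V. E y z} = b 0"
  using distance_regular_neighbour_count[of V E D a b c y y]
    distance_regular_a_0 distance_regular_c_0 by fastforce

lemma distance_regular_intersection_sum:
  assumes DR: "distance_regular V E D a b c" and "j \<le> D"
  shows "c j + a j + b j = b 0"
proof -
  obtain x y where "x \<in> V" "y \<in> V" "gdist E x y = j"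
    using diameter_level[OF distance_regular_graph[OF DR]] distance_regular_diameter[OF DR]
      assms(2) by blast
  then show ?thesis
    using distance_regular_neighbour_count[OF DR] distance_regular_valency[OF DR] by metis
qed

lemma distance_regular_c_pos:
  assumes DR: "distance_regular V E D a b c" and "0 < j" "j \<le> D"
  shows "0 < c j"
proof -
  have G: "connected_simple_graph V E" using distance_regular_graph[OF DR] .
  have "j - 1 < diameter V E" "Suc (j - 1) = j"
    using distance_regular_diameter[OF DR] assms(2,3) by auto
  then obtain x u v where "x \<in> V" "u \<in> V" "v \<in> V" "E u v"
    and uv: "gdist E x u = j - 1" "gdist E x v = j"
    using diameter_edge_between_levels[OF G] by metis
  then have "u \<in> {z\<in>V. E v z \<and> gdist E x z + 1 = j}"
    using G assms(2) unfolding connected_simple_graph_def by auto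
  moreover have "c j = card {z\<in>V. E v z \<and> gdist E x z + 1 = j}"
    using distance_regular_intersection_numbers(1)[OF DR \<open>x \<in> V\<close> \<open>v \<in> V\<close>] uv by simp
  ultimately show ?thesis
    using G unfolding connected_simple_graph_def by (auto simp: card_gt_0_iff)
qed

lemma distance_regular_b_pos:
  assumes DR: "distance_regular V E D a b c" and "j < D"
  shows "0 < b j"
proof -
  have G: "connected_simple_graph V E" using distance_regular_graph[OF DR] .
  obtain x u v where "x \<in> V" "u \<in> V" "v \<in> V" "E u v"
    and uv: "gdist E x u = j" "gdist E x v = Suc j"
    using diameter_edge_between_levels[OF G] distance_regular_diameter[OF DR] assms(2) by blast
  then have "v \<in> {z\<in>V. E u z \<and> gdist E x z = j + 1}" by simp
  moreover have "b j = card {z\<in>V. E u z \<and> gdist E x z = j + 1}"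
    using distance_regular_intersection_numbers(3)[OF DR \<open>x \<in> V\<close> \<open>u \<in> V\<close>] uv by simp
  ultimately show ?thesis
    using G unfolding connected_simple_graph_def by (auto simp: card_gt_0_iff)
qed

lemma pseudo_cosine_recurrence:
  assumes "pseudo_cosine D a b c \<theta> \<sigma>" "0 < i" "i < D"
  shows "c i * \<sigma> (i - 1) + a i * \<sigma> i + b i * \<sigma> (Suc i) = \<theta> * \<sigma> i"
  using assms unfolding pseudo_cosine_def by auto

lemma pseudo_cosine_eigenvalue:
  assumes "pseudo_cosine D a b c \<theta> \<sigma>" "0 < D" "a 0 = 0"
  shows "\<theta> = b 0 * \<sigma> 1"
  using assms unfolding pseudo_cosine_def by force

lemma pseudo_cosine_consecutive_nonzero:
  assumes "is_pseudo_cosine D a b c \<sigma>" and c_pos: "\<And>j. 0 < j \<Longrightarrow> j < D \<Longrightarrow> 0 < c j"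
    and "i < D"
  shows "\<sigma> i \<noteq> 0 \<or> \<sigma> (Suc i) \<noteq> 0"
  using \<open>i < D\<close>
proof (induction i)
  case 0
  then show ?case using assms(1) unfolding is_pseudo_cosine_def pseudo_cosine_def by auto
next
  case (Suc i)
  obtain \<theta> where "pseudo_cosine D a b c \<theta> \<sigma>"
    using assms(1) unfolding is_pseudo_cosine_def by blast
  from pseudo_cosine_recurrence[OF this _ Suc.prems]
  have "\<sigma> (Suc i) = 0 \<Longrightarrow> \<sigma> (Suc (Suc i)) = 0 \<Longrightarrow> \<sigma> i = 0"
    using c_pos[OF _ Suc.prems] by simp
  then show ?case using Suc.IH Suc.prems by linarith
qed

lemma pseudo_cosine_at_plateau:
  assumes "pseudo_cosine D a b c \<theta> \<sigma>" "a 0 = 0" "0 < j" "j < D"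
    and "c j + a j + b j = b 0" and "\<sigma> (Suc j) = \<sigma> j"
  shows "c j * \<sigma> (j - 1) = (b 0 * (\<sigma> 1 - 1) + c j) * \<sigma> j"
proof -
  have "real (b 0) = c j + a j + b j" using assms(5) by (metis of_nat_add)
  then show ?thesis
    using pseudo_cosine_recurrence[OF assms(1,3,4)] pseudo_cosine_eigenvalue[OF assms(1) _ assms(2)]
      assms(3,4,6) by (simp add: algebra_simps)
qed

lemma tight_pair_no_common_plateau:
  assumes tight: "tight_pair D a b c \<sigma> \<rho>" and "nontrivial_pc \<sigma>" "nontrivial_pc \<rho>"
    and "a 0 = 0" and c_pos: "\<And>i. 0 < i \<Longrightarrow> i < D \<Longrightarrow> 0 < c i"
    and "0 < j" "j < D" "0 < b j" "c j + a j + b j = b 0"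
  shows "\<sigma> (Suc j) \<noteq> \<sigma> j \<or> \<rho> (Suc j) \<noteq> \<rho> j"
proof (rule ccontr)
  assume "\<not> ?thesis"
  then have plateau: "\<sigma> (Suc j) = \<sigma> j" "\<rho> (Suc j) = \<rho> j" by auto
  obtain \<theta>\<^sub>1 \<theta>\<^sub>2 \<theta>\<^sub>3 where "pseudo_cosine D a b c \<theta>\<^sub>1 \<sigma>" "pseudo_cosine D a b c \<theta>\<^sub>2 \<rho>"
    and "pseudo_cosine D a b c \<theta>\<^sub>3 (\<lambda>i. \<sigma> i * \<rho> i)"
    using tight unfolding tight_pair_def is_pseudo_cosine_def by blast
  have at_plateau: "c j * f (j - 1) = (b 0 * (f 1 - 1) + c j) * f j"
    if "pseudo_cosine D a b c \<theta> f" "f (Suc j) = f j" for \<theta> and f :: "nat \<Rightarrow> real"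
    using pseudo_cosine_at_plateau[OF that(1) assms(4,6,7,9) that(2)] .
  define k where "k = real (b 0)"
  define C where "C = real (c j)"
  define x where "x = \<sigma> 1 - 1"
  define y where "y = \<rho> 1 - 1"
  have \<sigma>_back: "C * \<sigma> (j - 1) = (k * x + C) * \<sigma> j"
    using at_plateau[OF \<open>pseudo_cosine D a b c \<theta>\<^sub>1 \<sigma>\<close> plateau(1)]
    unfolding k_def C_def x_def by simp
  have \<rho>_back: "C * \<rho> (j - 1) = (k * y + C) * \<rho> j"
    using at_plateau[OF \<open>pseudo_cosine D a b c \<theta>\<^sub>2 \<rho>\<close> plateau(2)]
    unfolding k_def C_def y_def by simp
  have "\<sigma> 1 * \<rho> 1 - 1 = x + y + x * y" unfolding x_def y_def by algebra
  then have prod_back: "C * (\<sigma> (j - 1) * \<rho> (j - 1)) = (k * (x + y + x * y) + C) * (\<sigma> j * \<rho> j)"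
    using at_plateau[OF \<open>pseudo_cosine D a b c \<theta>\<^sub>3 (\<lambda>i. \<sigma> i * \<rho> i)\<close>] plateau
    unfolding k_def C_def by simp
  have "(k * x + C) * (k * y + C) * (\<sigma> j * \<rho> j) = (C * \<sigma> (j - 1)) * (C * \<rho> (j - 1))"
    using \<sigma>_back \<rho>_back by simp
  also have "\<dots> = C * (C * (\<sigma> (j - 1) * \<rho> (j - 1)))" by (simp add: algebra_simps)
  also have "\<dots> = C * (k * (x + y + x * y) + C) * (\<sigma> j * \<rho> j)"
    using prod_back by simp
  finally have "k * x * y * (k - C) * (\<sigma> j * \<rho> j) = 0" by algebra
  moreover have "\<sigma> j \<noteq> 0" "\<rho> j \<noteq> 0"
    using pseudo_cosine_consecutive_nonzero[where \<sigma> = \<sigma>, OF _ c_pos \<open>j < D\<close>]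
      pseudo_cosine_consecutive_nonzero[where \<sigma> = \<rho>, OF _ c_pos \<open>j < D\<close>] plateau tight
    unfolding tight_pair_def by auto
  moreover have "x \<noteq> 0" "y \<noteq> 0"
    using assms(2,3) unfolding nontrivial_pc_def x_def y_def by auto
  moreover have "k - C > 0" "k > 0"
    using assms(8,9) c_pos[OF assms(6,7)] unfolding k_def C_def by linarith+
  ultimately show False by simp
qed

lemma auxiliary_parameter_step:
  assumes "auxiliary_parameter D \<sigma> \<rho> \<epsilon>" "j < D"
  shows "\<sigma> (Suc j) * \<rho> (Suc j) - \<sigma> j * \<rho> j = \<epsilon> * (\<sigma> j * \<rho> (Suc j) - \<sigma> (Suc j) * \<rho> j)"
proof -
  have "Suc j \<in> {1..D}" using assms(2) by simp
  from bspec[OF assms(1)[unfolded auxiliary_parameter_def] this] show ?thesis by simp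
qed

lemma auxiliary_parameter_plateau_fst:
  assumes "auxiliary_parameter D \<sigma> \<rho> \<epsilon>" "\<epsilon> \<noteq> 1" "j < D"
    and "\<sigma> (Suc j) = \<sigma> j" "\<sigma> j \<noteq> 0"
  shows "\<rho> (Suc j) = \<rho> j"
proof -
  have "(1 - \<epsilon>) * \<sigma> j * (\<rho> (Suc j) - \<rho> j) = 0"
    using auxiliary_parameter_step[OF assms(1,3)] assms(4) by (simp add: algebra_simps)
  then show ?thesis using assms(2,5) by simp
qed

lemma auxiliary_parameter_plateau_snd:
  assumes "auxiliary_parameter D \<sigma> \<rho> \<epsilon>" "\<epsilon> \<noteq> -1" "j < D"
    and "\<rho> (Suc j) = \<rho> j" "\<rho> j \<noteq> 0"
  shows "\<sigma> (Suc j) = \<sigma> j"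
proof -
  have "(1 + \<epsilon>) * \<rho> j * (\<sigma> (Suc j) - \<sigma> j) = 0"
    using auxiliary_parameter_step[OF assms(1,3)] assms(4) by (simp add: algebra_simps)
  moreover have "1 + \<epsilon> \<noteq> 0" using assms(2) by linarith
  ultimately show ?thesis using assms(5) by simp
qed

theorem lemma8p5:
  fixes V :: "'v set" and E :: "'v \<Rightarrow> 'v \<Rightarrow> bool"
    and D :: nat and a b c :: "nat \<Rightarrow> nat"
    and \<sigma> \<rho> :: "nat \<Rightarrow> real" and \<epsilon> :: real
  assumes "distance_regular V E D a b c"
    and "D \<ge> 3"
    and "is_pseudo_cosine D a b c \<sigma>" and "nontrivial_pc \<sigma>"
    and "is_pseudo_cosine D a b c \<rho>" and "nontrivial_pc \<rho>"
    and "tight_pair D a b c \<sigma> \<rho>"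
    and "auxiliary_parameter D \<sigma> \<rho> \<epsilon>"
    and "\<epsilon> \<noteq> 1" and "\<epsilon> \<noteq> -1"
  shows "\<forall>i\<in>{1..D}. \<sigma> (i - 1) \<noteq> \<sigma> i \<and> \<rho> (i - 1) \<noteq> \<rho> i"
proof -
  have a_0: "a 0 = 0" and c_pos: "\<And>i. 0 < i \<Longrightarrow> i < D \<Longrightarrow> 0 < c i"
    using distance_regular_a_0[OF assms(1)] distance_regular_c_pos[OF assms(1)] by auto
  have plateau_nonzero: "f j \<noteq> 0"
    if "is_pseudo_cosine D a b c f" "j < D" "f (Suc j) = f j" for f j
    using pseudo_cosine_consecutive_nonzero[OF that(1) c_pos that(2)] that(3) by auto
  have no_common_plateau: "\<sigma> (Suc j) \<noteq> \<sigma> j \<or> \<rho> (Suc j) \<noteq> \<rho> j" if "j < D" for j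
  proof (cases "j = 0")
    case True
    then show ?thesis using assms(3,4)
      unfolding is_pseudo_cosine_def pseudo_cosine_def nontrivial_pc_def by auto
  next
    case False
    then show ?thesis
      using tight_pair_no_common_plateau[OF assms(7,4,6) a_0 c_pos _ that]
        distance_regular_b_pos[OF assms(1) that] distance_regular_intersection_sum[OF assms(1)] that
      by auto
  qed
  show ?thesis
  proof
    fix i assume "i \<in> {1..D}"
    then obtain j where i: "i = Suc j" and j: "j < D" by (cases i) auto
    have "\<sigma> (Suc j) = \<sigma> j \<Longrightarrow> \<rho> (Suc j) = \<rho> j"
      using auxiliary_parameter_plateau_fst[OF assms(8,9) j] plateau_nonzero[OF assms(3) j] by blast
    moreover have "\<rho> (Suc j) = \<rho> j \<Longrightarrow> \<sigma> (Suc j) = \<sigma> j"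
      using auxiliary_parameter_plateau_snd[OF assms(8,10) j] plateau_nonzero[OF assms(5) j] by blast
    ultimately show "\<sigma> (i - 1) \<noteq> \<sigma> i \<and> \<rho> (i - 1) \<noteq> \<rho> i"
      using no_common_plateau[OF j] i by auto
  qed
qed

end
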